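(* Let $B$ be an $n\times n$ skew-symmetrizable matrix, $\mathbf d=(d_1,\dots,d_n)$ positive integers, $D=\mathrm{diag}(d_1,\dots,d_n)$, and let $C^t=(c^t_{ij})$ be the $C$-matrices of the $(\mathbf d,\mathbf z)$-cluster pattern with principal coefficients and initial seed $(\mathbf x,\mathbf y,B)$. Put $\tilde c^t_{ij}=d_i^{-1}c^t_{ij}d_j$, i.e. $\tilde C^t=D^{-1}C^tD$. Then for every vertex $t$, $\tilde C^t$ is an integer matrix and equals the $C$-matrix at $t$ of the ordinary cluster pattern with principal coefficients and initial seed $(\mathbf x,\mathbf y,BD)$.
   Context: $[a]_+=\max(a,0)$; all matrices are integer; $BD$ is again skew-symmetrizable. Mutation data: positive integers $\mathbf d$ and frozen coefficients $z_{i,s}$ ($1\le s\le d_i-1$) with $z_{i,s}=z_{i,d_i-s}$, $z_{i,0}=z_{i,d_i}=1$. For formal variables $\mathbf y,\mathbf z$, $\mathrm{Trop}(\mathbf y,\mathbf z)$ is the free abelian multiplicative group they generate with $\oplus$ the componentwise minimum of exponents. The $(\mathbf d,\mathbf z)$-mutation at $k$ acts on a skew-symmetrizable $B=(b_{ij})$ and $y$-variables by: $b'_{ij}=-b_{ij}$ if $i=k$ or $j=k$, else $b'_{ij}=b_{ij}+d_k([-b_{ik}]_+b_{kj}+b_{ik}[b_{kj}]_+)$; $y'_k=y_k^{-1}$, $y'_i=y_i(y_k^{[\varepsilon b_{ki}]_+})^{d_k}(\bigoplus_{s=0}^{d_k}z_{k,s}y_k^{\varepsilon s})^{-b_{ki}}$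 ($i\ne k$), $\varepsilon=\pm1$. $\mathbb T_n$ is the $n$-regular tree with edges labeled $1,\dots,n$, distinct labels at each vertex. A $(\mathbf d,\mathbf z)$-cluster pattern with principal coefficients assigns seeds in $\mathrm{Trop}(\mathbf y,\mathbf z)$ to vertices, related by mutation at $k$ along edges labeled $k$, with initial seed $(\mathbf x,\mathbf y,B)$ at a fixed vertex $t_0$ whose $y$-variables are the generators. Each $y^t_j$ is a Laurent monomial $\prod_iy_i^{c^t_{ij}}$ in $\mathbf y$ alone; $C^t=(c^t_{ij})$ is the $C$-matrix. The ordinary cluster pattern with principal coefficients is the special case $\mathbf d=(1,\dots,1)$ (no $\mathbf z$), with $C$-matrices defined the same way. *)

theory Defs
  imports Complex_Main
begin

text \<open>Integer matrices are functions nat => nat => int, only entries with indices < n matter.\<close>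
type_synonym imat = "nat \<Rightarrow> nat \<Rightarrow> int"

definition pos :: "int \<Rightarrow> int" where "pos a = max a 0"

definition skew_symmetrizable :: "nat \<Rightarrow> imat \<Rightarrow> bool" where
  "skew_symmetrizable n B \<longleftrightarrow>
     (\<exists>r::nat \<Rightarrow> int. (\<forall>i<n. r i > 0) \<and>
        (\<forall>i<n. \<forall>j<n. r i * B i j = - (r j * B j i)))"

text \<open>Generators of the tropical semifield Trop(y,z): Y i = y_i and Z i s = z_{i,s}.
  The identification z_{i,s} = z_{i,d_i-s} is built in by using the index min s (d_i - s).
  An element of Trop(y,z) is represented by its exponent vector; multiplication is
  addition of exponents, the tropical sum is the componentwise minimum.\<close>
datatype gen = Y nat | Z nat nat

type_synonym trop = "gen \<Rightarrow> int"

definition zgen :: "(nat \<Rightarrow> nat) \<Rightarrow> nat \<Rightarrow> nat \<Rightarrow> trop" where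
  "zgen d k s = (if s = 0 \<or> s = d k then (\<lambda>_. 0)
                 else (\<lambda>g. if g = Z k (min s (d k - s)) then 1 else 0))"

definition mut_B :: "(nat \<Rightarrow> nat) \<Rightarrow> nat \<Rightarrow> imat \<Rightarrow> imat" where
  "mut_B d k B = (\<lambda>i j. if i = k \<or> j = k then - B i j
       else B i j + int (d k) * (pos (- B i k) * B k j + B i k * pos (B k j)))"

definition mut_y :: "(nat \<Rightarrow> nat) \<Rightarrow> nat \<Rightarrow> imat \<Rightarrow> int \<Rightarrow> (nat \<Rightarrow> trop) \<Rightarrow> (nat \<Rightarrow> trop)" where
  "mut_y d k B eps y = (\<lambda>i. if i = k then (\<lambda>g. - y k g)
     else (\<lambda>g. y i g + int (d k) * pos (eps * B k i) * y k g
                - B k i * Min ((\<lambda>s. zgen d k s g + eps * int s * y k g) ` {0..d k})))"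

definition init_y :: "nat \<Rightarrow> trop" where
  "init_y = (\<lambda>j g. if g = Y j then 1 else 0)"

definition seed_at :: "(nat \<Rightarrow> nat) \<Rightarrow> imat \<Rightarrow> (nat \<times> int) list \<Rightarrow> imat \<times> (nat \<Rightarrow> trop)" where
  "seed_at d B0 ws = foldl (\<lambda>(B, y) (k, e). (mut_B d k B, mut_y d k B e y)) (B0, init_y) ws"

definition Cmat :: "(nat \<Rightarrow> nat) \<Rightarrow> imat \<Rightarrow> (nat \<times> int) list \<Rightarrow> imat" where
  "Cmat d B0 ws = (\<lambda>i j. snd (seed_at d B0 ws) j (Y i))"

definition Cmat_ord :: "imat \<Rightarrow> (nat \<times> int) list \<Rightarrow> imat" where
  "Cmat_ord B0 ws = Cmat (\<lambda>_. 1) B0 ws"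

text \<open>A vertex t of T_n is given by the reduced word of edge labels from t0
  (labels < n, no two consecutive equal); each step carries a sign choice eps = +-1.\<close>
definition valid_path :: "nat \<Rightarrow> (nat \<times> int) list \<Rightarrow> bool" where
  "valid_path n ws \<longleftrightarrow> (\<forall>p\<in>set ws. fst p < n \<and> (snd p = 1 \<or> snd p = -1)) \<and>
     (\<forall>m. Suc m < length ws \<longrightarrow> fst (ws ! m) \<noteq> fst (ws ! Suc m))"

end

theory Submission
  imports Defs
begin

(* Along a path the C-matrix records only the exponents of the generators
   y_m in the y-variables.  For those exponents the tropical sum in the (d,z)-mutation
   collapses: the z-variables contribute nothing, and the minimum over s in {0..d_k} of
   eps*s*c equals d_k * min 0 (eps*c).  Using eps = +-1 one obtains the sign-independent
   rule  c'_i = c_i + d_k ([b_ki]_+ c_k - b_ki min(0, c_k))  for i <> k, c'_k = -c_k.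
   We then show by induction along the path that the (d,z)-pattern for B and the ordinary
   pattern for BD stay related by a simulation: the exchange matrices are related by
   column scaling (B_t D), and the y_m-exponents satisfy  c'_i * d_m = c_i * d_i.
   Dividing by d_i > 0 yields the theorem; the sign choices of the two paths may differ. *)

abbreviation col_scale :: "(nat \<Rightarrow> nat) \<Rightarrow> imat \<Rightarrow> imat" where
  "col_scale d B \<equiv> \<lambda>i j. B i j * int (d j)"

lemma seed_at_snoc:
  "seed_at d B0 (ws @ [(k, e)]) =
     (mut_B d k (fst (seed_at d B0 ws)),
      mut_y d k (fst (seed_at d B0 ws)) e (snd (seed_at d B0 ws)))"
  unfolding seed_at_def by (simp split: prod.splits)

text \<open>The y_m-exponent of the tropical sum: z-variables have no y-part, so the minimum
  of eps*s*c over s in {0..d_k} is attained at an endpoint.\<close>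
lemma trop_sum_Y_exponent:
  "Min ((\<lambda>s. zgen d k s (Y m) + e * int s * c) ` {0..d k}) = int (d k) * min 0 (e * c)"
proof -
  have zgen_Y: "zgen d k s (Y m) = 0" for s by (simp add: zgen_def)
  have lower: "int (d k) * min 0 (e * c) \<le> e * int s * c" if "s \<le> d k" for s
  proof (cases "e * c \<ge> 0")
    case True
    have "0 \<le> (e * c) * int s" using True by simp
    then show ?thesis using True by (simp add: mult.commute mult.left_commute)
  next
    case False
    have "int (d k) * (e * c) \<le> int s * (e * c)"
      using that False by (intro mult_right_mono_neg) auto
    then show ?thesis using False by (simp add: mult.commute mult.left_commute)
  qed
  have attained: "int (d k) * min 0 (e * c) \<in> (\<lambda>s. e * int s * c) ` {0..d k}"
  proof (cases "e * c \<ge> 0")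
    case True
    then show ?thesis by (auto intro!: image_eqI[where x = 0])
  next
    case False
    then show ?thesis by (auto intro!: image_eqI[where x = "d k"])
  qed
  show ?thesis
    unfolding zgen_Y add_0
    by (rule Min_eqI) (use lower attained in auto)
qed

lemma exponent_update_sign_indep:
  assumes "e = 1 \<or> e = -1"
  shows "pos (e * b) * c - b * min 0 (e * c) = pos b * c - b * min 0 (c::int)"
  using assms
  by (cases "b \<ge> 0"; cases "c \<ge> 0") (auto simp: pos_def max_def min_def algebra_simps)

lemma mut_y_Y_exponent:
  assumes "e = 1 \<or> e = -1"
  shows "mut_y d k B e y i (Y m) =
    (if i = k then - y k (Y m)
     else y i (Y m) + int (d k) * (pos (B k i) * y k (Y m) - B k i * min 0 (y k (Y m))))"
proof -
  have "y i (Y m) + int (d k) * pos (e * B k i) * y k (Y m)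
          - B k i * (int (d k) * min 0 (e * y k (Y m)))
        = y i (Y m) + int (d k) * (pos (e * B k i) * y k (Y m) - B k i * min 0 (e * y k (Y m)))"
    by (simp add: algebra_simps)
  then show ?thesis
    by (simp add: mut_y_def trop_sum_Y_exponent exponent_update_sign_indep[OF assms])
qed

lemma pos_mult_nat: "pos (x * int a) = pos x * int a"
  by (cases "x \<ge> 0") (auto simp: pos_def max_def mult_le_0_iff)

lemma min_0_mult_nat: "min 0 (x * int a) = min 0 x * int a"
  by (cases "x \<ge> 0"; cases "a = 0") (auto simp: min_def mult_le_0_iff zero_le_mult_iff)

lemma mut_B_col_scale:
  "mut_B (\<lambda>_. 1) k (col_scale d B) = col_scale d (mut_B d k B)"
proof (intro ext)
  fix i j
  have neg: "- (B i k * int (d k)) = (- B i k) * int (d k)" by simp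
  show "mut_B (\<lambda>_. 1) k (col_scale d B) i j = col_scale d (mut_B d k B) i j"
    unfolding mut_B_def neg pos_mult_nat by (simp add: algebra_simps)
qed

lemma exponent_update_scaled:
  fixes x x' c c' b :: int and di dk dm :: nat
  assumes x: "x' * int dm = x * int di" and c: "c' * int dm = c * int dk"
  shows "(x' + (pos (b * int di) * c' - b * int di * min 0 c')) * int dm
         = (x + int dk * (pos b * c - b * min 0 c)) * int di"
proof -
  have min_c: "min 0 c' * int dm = min 0 c * int dk"
    using c by (metis min_0_mult_nat)
  have "(x' + (pos (b * int di) * c' - b * int di * min 0 c')) * int dm
        = x' * int dm + int di * (pos b * (c' * int dm) - b * (min 0 c' * int dm))"
    by (simp add: pos_mult_nat algebra_simps)
  also have "\<dots> = (x + int dk * (pos b * c - b * min 0 c)) * int di"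
    unfolding x c min_c by (simp add: algebra_simps)
  finally show ?thesis .
qed

lemma simulation:
  assumes "map fst ws' = map fst ws"
    and "\<forall>p\<in>set ws. snd p = 1 \<or> snd p = -1" and "\<forall>p\<in>set ws'. snd p = 1 \<or> snd p = -1"
  shows "fst (seed_at (\<lambda>_. 1) (col_scale d B) ws') = col_scale d (fst (seed_at d B ws))
     \<and> (\<forall>i. snd (seed_at (\<lambda>_. 1) (col_scale d B) ws') i (Y m) * int (d m)
            = snd (seed_at d B ws) i (Y m) * int (d i))"
  using assms
proof (induction ws arbitrary: ws' rule: rev_induct)
  case Nil
  then show ?case by (simp add: seed_at_def init_y_def)
next
  case (snoc p ws)
  obtain k e where p: "p = (k, e)" by (cases p)
  obtain ws0 e' where ws': "ws' = ws0 @ [(k, e')]" and dirs: "map fst ws0 = map fst ws"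
    using snoc.prems(1) p by (cases ws' rule: rev_cases) auto
  have e: "e = 1 \<or> e = -1" and e': "e' = 1 \<or> e' = -1"
    using snoc.prems(2,3) p ws' by auto
  define B1 where "B1 = fst (seed_at d B ws)"
  define y1 where "y1 = snd (seed_at d B ws)"
  define y2 where "y2 = snd (seed_at (\<lambda>_. 1) (col_scale d B) ws0)"
  have IH_B: "fst (seed_at (\<lambda>_. 1) (col_scale d B) ws0) = col_scale d B1"
    and IH_y: "\<And>i. y2 i (Y m) * int (d m) = y1 i (Y m) * int (d i)"
    using snoc.IH[OF dirs] snoc.prems ws' by (auto simp: B1_def y1_def y2_def)
  have step_y: "mut_y (\<lambda>_. 1) k (col_scale d B1) e' y2 i (Y m) * int (d m)
                = mut_y d k B1 e y1 i (Y m) * int (d i)" for i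
  proof (cases "i = k")
    case True
    then show ?thesis using IH_y[of k] by (simp add: mut_y_Y_exponent[OF e] mut_y_Y_exponent[OF e'])
  next
    case False
    then show ?thesis
      using exponent_update_scaled[OF IH_y[of i] IH_y[of k], of "B1 k i"]
      by (simp add: mut_y_Y_exponent[OF e] mut_y_Y_exponent[OF e'] mult.assoc)
  qed
  show ?case
    unfolding ws' p seed_at_snoc IH_B
    using mut_B_col_scale step_y by (simp add: B1_def y1_def y2_def)
qed

theorem mainTheorem8:
  fixes n :: nat and B :: imat and d :: "nat \<Rightarrow> nat"
    and ws ws' :: "(nat \<times> int) list"
  assumes "skew_symmetrizable n B"
    and "\<forall>i<n. d i > 0"
    and "valid_path n ws" and "valid_path n ws'"
    and "map fst ws' = map fst ws"
  shows "\<forall>i<n. \<forall>j<n.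
     (of_int (Cmat d B ws i j) * of_nat (d j) / of_nat (d i) :: rat)
       = of_int (Cmat_ord (\<lambda>i j. B i j * int (d j)) ws' i j)"
proof (intro allI impI)
  fix i j assume i: "i < n" and j: "j < n"
  have signs: "\<forall>p\<in>set ws. snd p = 1 \<or> snd p = -1" "\<forall>p\<in>set ws'. snd p = 1 \<or> snd p = -1"
    using assms(3,4) by (auto simp: valid_path_def)
  have scaled: "Cmat_ord (col_scale d B) ws' i j * int (d i) = Cmat d B ws i j * int (d j)"
    using simulation[OF assms(5) signs, where d = d and B = B and m = i] by (simp add: Cmat_ord_def Cmat_def)
  have "(of_nat (d i) :: rat) \<noteq> 0" using assms(2) i by simp
  then show "(of_int (Cmat d B ws i j) * of_nat (d j) / of_nat (d i) :: rat)
       = of_int (Cmat_ord (\<lambda>i j. B i j * int (d j)) ws' i j)"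
    using arg_cong[OF scaled, of "of_int :: int \<Rightarrow> rat"] by (simp add: field_simps)
qed

end
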